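(* Let $V$ be a finite-dimensional vector space over a finite field of characteristic $p$, equipped with a bilinear or hermitian form which is either nondegenerate or identically zero, and let $\Delta=\Delta(V)$ be the group of all similarities of $V$ (with respect to this form). Let $x\in\Delta$ be an element of prime-power order whose image in $\Delta/\mathrm{Z}(\Delta)$ has prime order. Then one of the following holds: (1) $x$ is unipotent and stabilizes a $1$-dimensional subspace; (2) the form is identically zero, $x$ is semisimple and leaves invariant two nonzero subspaces complementing each other; (3) the form is nondegenerate, $x$ is semisimple and leaves invariant a proper nonzero nondegenerate subspace and its orthogonal complement; (4) the form is nondegenerate and of maximal Witt index, $x$ is semisimple and leaves invariant a totally isotropic subspace of dimension $\frac{1}{2}\dim V$; (5) $x$ is semisimple and acts irreducibly on $V$.
   Context: An element is unipotent if its order is a power of $p$ and semisimple if its order is coprime to $p$. A subspace is nondegenerate if the restriction of the form to it is nondegenerate, and totally isotropic if the restriction of the form to it is identically zero. *)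

theory Defs
  imports "HOL-Analysis.Analysis"
begin

text \<open>A form is a map B :: V => V => 'k, sesquilinear w.r.t. a field
automorphism sigma with sigma o sigma = id (sigma = id in the bilinear case).\<close>

definition field_invol :: "('k::field \<Rightarrow> 'k) \<Rightarrow> bool" where
  "field_invol \<sigma> \<longleftrightarrow> (\<forall>a b. \<sigma> (a + b) = \<sigma> a + \<sigma> b) \<and> (\<forall>a b. \<sigma> (a * b) = \<sigma> a * \<sigma> b)
     \<and> (\<forall>a. \<sigma> (\<sigma> a) = a)"

definition sesquilinear :: "('k::field \<Rightarrow> 'k) \<Rightarrow> ('k^'n \<Rightarrow> 'k^'n \<Rightarrow> 'k) \<Rightarrow> bool" where
  "sesquilinear \<sigma> B \<longleftrightarrow>
     (\<forall>u u' v. B (u + u') v = B u v + B u' v) \<and> (\<forall>c u v. B (c *s u) v = c * B u v) \<and>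
     (\<forall>u v v'. B u (v + v') = B u v + B u v') \<and> (\<forall>c u v. B u (c *s v) = \<sigma> c * B u v)"

definition bil_or_herm_form :: "('k::field \<Rightarrow> 'k) \<Rightarrow> ('k^'n \<Rightarrow> 'k^'n \<Rightarrow> 'k) \<Rightarrow> bool" where
  "bil_or_herm_form \<sigma> B \<longleftrightarrow> field_invol \<sigma> \<and> sesquilinear \<sigma> B \<and>
     ((\<sigma> = id \<and> ((\<forall>u v. B u v = B v u) \<or> (\<forall>v. B v v = 0))) \<or>
      (\<sigma> \<noteq> id \<and> (\<forall>u v. B u v = \<sigma> (B v u))))"

definition nondegenerate_form :: "('k::field^'n \<Rightarrow> 'k^'n \<Rightarrow> 'k) \<Rightarrow> bool" where
  "nondegenerate_form B \<longleftrightarrow> (\<forall>u. (\<forall>v. B u v = 0) \<longrightarrow> u = 0)"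

definition zero_form :: "('k::field^'n \<Rightarrow> 'k^'n \<Rightarrow> 'k) \<Rightarrow> bool" where
  "zero_form B \<longleftrightarrow> (\<forall>u v. B u v = 0)"

definition similarities :: "('k::field^'n \<Rightarrow> 'k^'n \<Rightarrow> 'k) \<Rightarrow> ('k^'n^'n) set" where
  "similarities B = {g. invertible g \<and>
      (\<exists>c. c \<noteq> 0 \<and> (\<forall>u v. B (g *v u) (g *v v) = c * B u v))}"

definition group_center :: "('k::field^'n^'n) set \<Rightarrow> ('k^'n^'n) set" where
  "group_center G = {z \<in> G. \<forall>g\<in>G. z ** g = g ** z}"

primrec mpow :: "'k::field^'n^'n \<Rightarrow> nat \<Rightarrow> 'k^'n^'n" where
  "mpow x 0 = mat 1"
| "mpow x (Suc m) = x ** mpow x m"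

definition elem_order :: "'k::field^'n^'n \<Rightarrow> nat" where
  "elem_order x = (LEAST m. 0 < m \<and> mpow x m = mat 1)"

text \<open>Order of the image of x in the quotient group G/Z, Z a normal subgroup
  (the coset xZ has order the least m>0 with x^m in Z).\<close>
definition quot_order :: "('k::field^'n^'n) set \<Rightarrow> 'k^'n^'n \<Rightarrow> nat" where
  "quot_order Z x = (LEAST m. 0 < m \<and> mpow x m \<in> Z)"

definition unipotent :: "'k::field^'n^'n \<Rightarrow> bool" where
  "unipotent x \<longleftrightarrow> (\<exists>k. elem_order x = CHAR('k) ^ k)"

definition semisimple :: "'k::field^'n^'n \<Rightarrow> bool" where
  "semisimple x \<longleftrightarrow> coprime (elem_order x) CHAR('k)"

definition invariant :: "'k::field^'n^'n \<Rightarrow> ('k^'n) set \<Rightarrow> bool" where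
  "invariant x W \<longleftrightarrow> (\<lambda>v. x *v v) ` W \<subseteq> W"

definition nondegenerate_subspace :: "('k::field^'n \<Rightarrow> 'k^'n \<Rightarrow> 'k) \<Rightarrow> ('k^'n) set \<Rightarrow> bool" where
  "nondegenerate_subspace B W \<longleftrightarrow> (\<forall>u\<in>W. (\<forall>v\<in>W. B u v = 0) \<longrightarrow> u = 0)"

definition totally_isotropic :: "('k::field^'n \<Rightarrow> 'k^'n \<Rightarrow> 'k) \<Rightarrow> ('k^'n) set \<Rightarrow> bool" where
  "totally_isotropic B W \<longleftrightarrow> (\<forall>u\<in>W. \<forall>v\<in>W. B u v = 0)"

definition orth_compl :: "('k::field^'n \<Rightarrow> 'k^'n \<Rightarrow> 'k) \<Rightarrow> ('k^'n) set \<Rightarrow> ('k^'n) set" where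
  "orth_compl B W = {v. \<forall>w\<in>W. B w v = 0}"

definition witt_index :: "('k::field^'n \<Rightarrow> 'k^'n \<Rightarrow> 'k) \<Rightarrow> nat" where
  "witt_index B = Max {vec.dim W | W. vec.subspace W \<and> totally_isotropic B W}"

definition max_witt_index :: "('k::field^'n \<Rightarrow> 'k^'n \<Rightarrow> 'k) \<Rightarrow> bool" where
  "max_witt_index B \<longleftrightarrow> witt_index B = CARD('n) div 2"

definition acts_irreducibly :: "'k::field^'n^'n \<Rightarrow> bool" where
  "acts_irreducibly x \<longleftrightarrow>
     (\<forall>W. vec.subspace W \<and> invariant x W \<longrightarrow> W = {0} \<or> W = UNIV)"

end

theory Submission
  imports Defs
begin

text \<open>If the order of \<open>x\<close> is a power \<open>p\<^sup>k\<close> of the characteristic, then \<open>x - 1\<close> is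
  nilpotent, because \<open>(x - 1)^(p\<^sup>k) = x^(p\<^sup>k) - 1 = 0\<close> in characteristic \<open>p\<close>; so \<open>x\<close> fixes a line.
  Otherwise the order of \<open>x\<close> is prime to \<open>p\<close>, and Maschke's averaging argument gives every
  \<open>x\<close>-invariant subspace an \<open>x\<close>-invariant complement, which settles the case of the zero form.
  For a nondegenerate form and a proper invariant subspace \<open>U \<noteq> 0\<close>, either \<open>U \<inter> U\<^sup>\<bottom> = 0\<close> and
  \<open>U\<close> is nondegenerate, or \<open>T = U \<inter> U\<^sup>\<bottom>\<close> is a nonzero invariant totally isotropic subspace.
  Adding to \<open>T\<close> an invariant complement \<open>T'\<close> of \<open>T\<^sup>\<bottom>\<close> gives a nondegenerate invariant
  subspace \<open>T + T'\<close>, which is proper unless \<open>T = T\<^sup>\<bottom>\<close>, i.e. unless \<open>2 dim T = dim V\<close>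
  and the Witt index is maximal.\<close>

lemma mpow_add: "mpow x (a + b) = mpow x a ** mpow x b"
  by (induction a) (simp_all add: matrix_mul_assoc)

lemma mpow_Suc2: "mpow x (Suc n) = mpow x n ** x"
  using mpow_add[of x n 1] by simp

lemma mpow_mult: "mpow x (a * b) = mpow (mpow x a) b"
  by (induction b) (simp_all add: mpow_add)

lemma mpow_mpow_vec: "mpow x a *v (mpow x b *v v) = mpow x (a + b) *v v"
  by (simp add: matrix_vector_mul_assoc mpow_add)

lemma mpow_inverse:
  assumes "x' ** x = mat 1"
  shows "mpow x' n ** mpow x n = mat 1"
proof (induction n)
  case 0
  then show ?case by simp
next
  case (Suc n)
  have "mpow x' (Suc n) ** mpow x (Suc n) = x' ** ((mpow x' n ** mpow x n) ** x)"
    unfolding mpow.simps(2)[of x' n] mpow_Suc2[of x n] by (simp only: matrix_mul_assoc)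
  then show ?case using Suc assms by simp
qed

lemma mpow_eq_mat1_exists:
  fixes x :: "'k::{field,finite}^'n^'n"
  assumes "invertible x"
  shows "\<exists>m>0. mpow x m = mat 1"
proof -
  obtain x' where x': "x' ** x = mat 1" using assms unfolding invertible_def by blast
  have "\<not> inj (mpow x)"
    using finite_imageD[of "mpow x" UNIV] infinite_UNIV_nat by (auto intro: finite)
  then obtain i j where "i \<noteq> j" "mpow x i = mpow x j" unfolding inj_def by blast
  then obtain i j where ij: "i < j" "mpow x i = mpow x j"
    by (cases "i < j") (auto simp: nat_neq_iff)
  have "mpow x j = mpow x i ** mpow x (j - i)"
    using mpow_add[of x i "j - i"] ij(1) by simp
  then have "mpow x' i ** mpow x i = mpow x' i ** (mpow x i ** mpow x (j - i))"
    using ij(2) by simp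
  then have "mpow x (j - i) = mat 1"
    by (simp add: matrix_mul_assoc mpow_inverse[OF x'])
  then show ?thesis using ij(1) by (intro exI[of _ "j - i"]) simp
qed

lemma mpow_elem_order:
  fixes x :: "'k::{field,finite}^'n^'n"
  assumes "invertible x"
  shows "0 < elem_order x \<and> mpow x (elem_order x) = mat 1"
  unfolding elem_order_def using mpow_eq_mat1_exists[OF assms] by (rule LeastI_ex)

lemma semisimple_of_nat_order_neq_0:
  fixes x :: "'k::field^'n^'n"
  assumes "semisimple x"
  shows "of_nat (elem_order x) \<noteq> (0::'k)"
proof
  assume "of_nat (elem_order x) = (0::'k)"
  then have "CHAR('k) dvd elem_order x" by (simp add: of_nat_eq_0_iff_char_dvd)
  with assms have "CHAR('k) dvd 1"
    unfolding semisimple_def by (rule coprime_common_divisor[OF _ _ dvd_refl])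
  then have "of_nat 1 = (0::'k)" by (simp only: of_nat_eq_0_iff_char_dvd)
  then show False by simp
qed

lemma invariant_mpow:
  assumes "invariant x U" "u \<in> U"
  shows "mpow x j *v u \<in> U"
proof (induction j)
  case 0
  then show ?case using assms(2) by simp
next
  case (Suc j)
  then show ?case
    using assms(1) unfolding invariant_def by (auto simp: matrix_vector_mul_assoc[symmetric])
qed

section \<open>Reflexive sesquilinear forms\<close>

lemma bil_or_herm_form_sesquilinear: "bil_or_herm_form \<sigma> B \<Longrightarrow> sesquilinear \<sigma> B"
  unfolding bil_or_herm_form_def by blast

lemma sesquilinear_linear_left:
  "sesquilinear \<sigma> B \<Longrightarrow> Vector_Spaces.linear (*s) (*) (\<lambda>u. B u v)"
  by (simp add: sesquilinear_def Vector_Spaces.linear_iff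
      vec.vector_space_axioms vector_space_over_itself.vector_space_axioms)

lemma sesquilinear_subspace_right_kernel:
  assumes "sesquilinear \<sigma> B"
  shows "vec.subspace {v. B u v = 0}"
proof -
  have "B u 0 = 0"
    using assms unfolding sesquilinear_def by (metis add_0 add_cancel_right_right)
  then show ?thesis
    using assms unfolding vec.subspace_def sesquilinear_def by simp
qed

lemma sesquilinear_right_kernel_span:
  assumes "sesquilinear \<sigma> B" "\<forall>s\<in>S. B u s = 0" "v \<in> vec.span S"
  shows "B u v = 0"
  using vec.span_minimal[OF _ sesquilinear_subspace_right_kernel[OF assms(1)]] assms(2,3)
  by blast

lemma subspace_orth_compl:
  assumes "sesquilinear \<sigma> B"
  shows "vec.subspace (orth_compl B W)"
proof -
  have "orth_compl B W = (\<Inter>w\<in>W. {v. B w v = 0})"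
    unfolding orth_compl_def by auto
  then show ?thesis
    using sesquilinear_subspace_right_kernel[OF assms] by (simp add: vec.subspace_Int)
qed

lemma bil_or_herm_form_orth_sym:
  assumes form: "bil_or_herm_form \<sigma> B" and "B u v = 0"
  shows "B v u = 0"
proof -
  have s: "sesquilinear \<sigma> B" using form by (rule bil_or_herm_form_sesquilinear)
  consider "\<forall>u v. B u v = B v u" | "\<forall>v. B v v = 0" | "field_invol \<sigma>" "\<forall>u v. B u v = \<sigma> (B v u)"
    using form unfolding bil_or_herm_form_def by blast
  then show ?thesis
  proof cases
    case 1
    then have "B v u = B u v" by blast
    then show ?thesis using assms(2) by simp
  next
    case 2
    have "0 = B (u + v) (u + v)" using 2 by simp
    also have "\<dots> = B u u + B u v + (B v u + B v v)"
      using s unfolding sesquilinear_def by (simp add: add.assoc)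
    finally show ?thesis using 2 assms(2) by simp
  next
    case 3
    have "\<sigma> 0 + \<sigma> 0 = \<sigma> 0 + 0"
      using 3(1) unfolding field_invol_def by (metis add_0 add.right_neutral)
    then have "\<sigma> 0 = 0" by (rule add_left_imp_eq)
    moreover have "B v u = \<sigma> (B u v)" using 3(2) by blast
    ultimately show ?thesis using assms(2) by simp
  qed
qed

lemma bil_or_herm_form_orth_compl_sym:
  assumes "bil_or_herm_form \<sigma> B"
  shows "v \<in> orth_compl B W \<longleftrightarrow> (\<forall>w\<in>W. B v w = 0)"
  using bil_or_herm_form_orth_sym[OF assms] unfolding orth_compl_def by blast

lemma invariant_orth_compl:
  assumes x_in: "x \<in> similarities B" and "0 < m" "mpow x m = mat 1"
    and inv: "invariant x W"
  shows "invariant x (orth_compl B W)"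
  unfolding invariant_def orth_compl_def
proof clarify
  fix v w assume v: "\<forall>w\<in>W. B w v = 0" and w: "w \<in> W"
  obtain c where c: "\<forall>u v. B (x *v u) (x *v v) = c * B u v"
    using x_in unfolding similarities_def by blast
  define w' where "w' = mpow x (m - 1) *v w"
  have "w' \<in> W" unfolding w'_def using inv w by (rule invariant_mpow)
  have "x *v w' = w"
    using assms(2,3) by (simp add: w'_def matrix_vector_mul_assoc flip: mpow.simps(2))
  then have "B w (x *v v) = c * B w' v"
    using c[rule_format, of w' v] by simp
  also have "B w' v = 0" using v \<open>w' \<in> W\<close> by blast
  finally show "B w (x *v v) = 0" by simp
qed

section \<open>Complements and dimensions of orthogonal complements\<close>

definition complementary :: "('k::field^'n) set \<Rightarrow> ('k^'n) set \<Rightarrow> bool" where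
  "complementary U W \<longleftrightarrow> vec.subspace U \<and> vec.subspace W \<and> U \<inter> W = {0} \<and>
     {u + w | u w. u \<in> U \<and> w \<in> W} = UNIV"

lemma complementary_dim:
  fixes U W :: "('k::field^'n) set"
  assumes "complementary U W"
  shows "vec.dim U + vec.dim W = CARD('n)"
  using vec.dim_sums_Int[of U W] assms unfolding complementary_def by (simp add: card_cart_basis)

lemma complementary_kernel_projection:
  fixes U :: "('k::field^'n) set"
  assumes U: "vec.subspace U" and P: "Vector_Spaces.linear (*s) (*s) P"
    and range: "\<And>v. P v \<in> U" and id: "\<And>u. u \<in> U \<Longrightarrow> P u = u"
  shows "complementary U {v. P v = 0}"
  unfolding complementary_def
proof (intro conjI)
  show "vec.subspace {v. P v = 0}"
    using P by (simp add: Vector_Spaces.linear_iff_module_hom module_hom.subspace_kernel)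
  show "U \<inter> {v. P v = 0} = {0}"
    using U id vec.subspace_0 by fastforce
  have "v = P v + (v - P v) \<and> P (v - P v) = 0" for v
    using id[OF range] by (simp add: vec.linear_diff[OF P])
  then show "{u + w |u w. u \<in> U \<and> w \<in> {v. P v = 0}} = UNIV"
    using range by blast
qed (fact U)

lemma complement_exists:
  fixes U :: "('k::field^'n) set"
  assumes "vec.subspace U"
  shows "\<exists>W. complementary U W"
proof -
  obtain P where "range P \<subseteq> U" "Vector_Spaces.linear (*s) (*s) P" "\<forall>u\<in>U. P u = u"
    using vec.linear_exists_left_inverse_on[OF vec.linear_id assms] by auto
  then show ?thesis
    using complementary_kernel_projection[OF assms] by blast
qed

lemma subspace_kernel_functional:
  "Vector_Spaces.linear (*s) (*) (f :: 'k::field^'n \<Rightarrow> 'k) \<Longrightarrow> vec.subspace {v. f v = 0}"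
  by (simp add: Vector_Spaces.linear_iff_module_hom module_hom.subspace_kernel)

lemma dim_le_dim_Int_kernel:
  fixes S :: "('k::field^'n) set"
  assumes S: "vec.subspace S" and f: "Vector_Spaces.linear (*s) (*) f"
  shows "vec.dim S \<le> vec.dim (S \<inter> {v. f v = 0}) + 1"
proof (cases "\<forall>s\<in>S. f s = 0")
  case True
  then have "S \<inter> {v. f v = 0} = S" by auto
  then show ?thesis by simp
next
  case False
  then obtain s0 where s0: "s0 \<in> S" "f s0 \<noteq> 0" by auto
  let ?K = "S \<inter> {v. f v = 0}"
  interpret f: Vector_Spaces.linear "(*s)" "(*)" f by (fact f)
  have "s \<in> vec.span (insert s0 ?K)" if s: "s \<in> S" for s
  proof -
    define c where "c = f s / f s0"
    have "s - c *s s0 \<in> ?K"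
      using s s0 S by (simp add: c_def f.diff f.scale vec.subspace_diff vec.subspace_scale)
    then have "(s - c *s s0) + c *s s0 \<in> vec.span (insert s0 ?K)"
      by (intro vec.span_add vec.span_scale) (simp_all add: vec.span_base)
    then show ?thesis by simp
  qed
  then have "vec.dim S \<le> vec.dim (insert s0 ?K)" by (intro vec.dim_mono) blast
  also have "\<dots> \<le> vec.dim ?K + 1" by (simp add: vec.dim_insert)
  finally show ?thesis .
qed

lemma dim_le_dim_Int_kernels:
  fixes S :: "('k::field^'n) set" and F :: "('k^'n \<Rightarrow> 'k) set"
  assumes "finite F" "\<forall>f\<in>F. Vector_Spaces.linear (*s) (*) f" "vec.subspace S"
  shows "vec.dim S \<le> vec.dim (S \<inter> {v. \<forall>f\<in>F. f v = 0}) + card F"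
  using assms
proof (induction F arbitrary: S rule: finite_induct)
  case empty
  then show ?case by simp
next
  case (insert f F)
  let ?S' = "S \<inter> {v. f v = 0}"
  have f: "Vector_Spaces.linear (*s) (*) f" and F: "\<forall>g\<in>F. Vector_Spaces.linear (*s) (*) g"
    using insert.prems(1) by simp_all
  have "vec.subspace ?S'"
    using insert.prems(2) subspace_kernel_functional[OF f] by (rule vec.subspace_inter)
  from insert.IH[OF F this]
  have IH: "vec.dim ?S' \<le> vec.dim (?S' \<inter> {v. \<forall>g\<in>F. g v = 0}) + card F" .
  have "?S' \<inter> {v. \<forall>g\<in>F. g v = 0} = S \<inter> {v. \<forall>g\<in>insert f F. g v = 0}" by auto
  then have "vec.dim S \<le> vec.dim (S \<inter> {v. \<forall>g\<in>insert f F. g v = 0}) + card F + 1"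
    using IH dim_le_dim_Int_kernel[OF insert.prems(2) f] by simp
  then show ?case using insert.hyps by simp
qed

lemma dim_le_dim_Int_left_orth:
  fixes B :: "'k::field^'n \<Rightarrow> 'k^'n \<Rightarrow> 'k"
  assumes s: "sesquilinear \<sigma> B" and S: "vec.subspace S"
  shows "vec.dim S \<le> vec.dim (S \<inter> {v. \<forall>c\<in>C. B v c = 0}) + vec.dim C"
proof -
  obtain BC where BC: "BC \<subseteq> C" "vec.independent BC" "C \<subseteq> vec.span BC" "card BC = vec.dim C"
    by (rule vec.basis_exists)
  have fin: "finite BC" using BC(2) by (rule vec.finiteI_independent)
  define F where "F = (\<lambda>b v. B v b) ` BC"
  have "{v. \<forall>f\<in>F. f v = 0} = {v. \<forall>c\<in>C. B v c = 0}"
    unfolding F_def using BC(1,3) sesquilinear_right_kernel_span[OF s] by auto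
  moreover have "finite F" "\<forall>f\<in>F. Vector_Spaces.linear (*s) (*) f"
    unfolding F_def using fin sesquilinear_linear_left[OF s] by auto
  then have "vec.dim S \<le> vec.dim (S \<inter> {v. \<forall>f\<in>F. f v = 0}) + card F"
    using S by (rule dim_le_dim_Int_kernels)
  moreover have "card F \<le> vec.dim C"
    unfolding F_def BC(4)[symmetric] using fin by (rule card_image_le)
  ultimately show ?thesis by simp
qed

lemma dim_orth_compl_ge:
  fixes B :: "'k::field^'n \<Rightarrow> 'k^'n \<Rightarrow> 'k"
  assumes form: "bil_or_herm_form \<sigma> B"
  shows "CARD('n) \<le> vec.dim W + vec.dim (orth_compl B W)"
proof -
  have "{v. \<forall>w\<in>W. B v w = 0} = orth_compl B W"
    using bil_or_herm_form_orth_compl_sym[OF form] by blast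
  then show ?thesis
    using dim_le_dim_Int_left_orth[OF bil_or_herm_form_sesquilinear[OF form] vec.subspace_UNIV, of W]
    by (simp add: card_cart_basis)
qed

lemma dim_orth_compl_le:
  fixes B :: "'k::field^'n \<Rightarrow> 'k^'n \<Rightarrow> 'k"
  assumes s: "sesquilinear \<sigma> B" and nd: "nondegenerate_form B" and W: "vec.subspace W"
  shows "vec.dim W + vec.dim (orth_compl B W) \<le> CARD('n)"
proof -
  obtain C where C: "complementary (orth_compl B W) C"
    using complement_exists[OF subspace_orth_compl[OF s]] by blast
  have "w = 0" if w: "w \<in> W" "\<forall>c\<in>C. B w c = 0" for w
  proof -
    have "B w v = 0" for v
    proof -
      obtain y c where "v = y + c" "y \<in> orth_compl B W" "c \<in> C"
        using C unfolding complementary_def by blast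
      then show ?thesis
        using w s unfolding orth_compl_def sesquilinear_def by simp
    qed
    then show ?thesis using nd unfolding nondegenerate_form_def by blast
  qed
  then have "vec.dim (W \<inter> {v. \<forall>c\<in>C. B v c = 0}) = 0" by auto
  then have "vec.dim W \<le> vec.dim C"
    using dim_le_dim_Int_left_orth[OF s W, of C] by linarith
  then show ?thesis using complementary_dim[OF C] by linarith
qed

lemma dim_orth_compl:
  fixes B :: "'k::field^'n \<Rightarrow> 'k^'n \<Rightarrow> 'k"
  assumes form: "bil_or_herm_form \<sigma> B" and nd: "nondegenerate_form B" and W: "vec.subspace W"
  shows "vec.dim W + vec.dim (orth_compl B W) = CARD('n)"
  using dim_orth_compl_ge[OF form] dim_orth_compl_le[OF bil_or_herm_form_sesquilinear[OF form] nd W]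
  by (simp add: le_antisym)

lemma totally_isotropic_dim_le:
  fixes B :: "'k::field^'n \<Rightarrow> 'k^'n \<Rightarrow> 'k"
  assumes form: "bil_or_herm_form \<sigma> B" and nd: "nondegenerate_form B"
    and T: "vec.subspace T" "totally_isotropic B T"
  shows "2 * vec.dim T \<le> CARD('n)"
proof -
  have "T \<subseteq> orth_compl B T"
    using T(2) unfolding totally_isotropic_def orth_compl_def by blast
  then have "vec.dim T \<le> vec.dim (orth_compl B T)" by (rule vec.dim_subset)
  then show ?thesis using dim_orth_compl[OF form nd T(1)] by simp
qed

lemma max_witt_indexI:
  fixes B :: "'k::field^'n \<Rightarrow> 'k^'n \<Rightarrow> 'k"
  assumes form: "bil_or_herm_form \<sigma> B" and nd: "nondegenerate_form B"
    and T: "vec.subspace T" "totally_isotropic B T" "2 * vec.dim T = CARD('n)"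
  shows "max_witt_index B"
proof -
  define D where "D = {vec.dim W | W :: ('k^'n) set. vec.subspace W \<and> totally_isotropic B W}"
  have D_le: "d \<le> CARD('n) div 2" if "d \<in> D" for d
    using that totally_isotropic_dim_le[OF form nd] unfolding D_def by fastforce
  then have "finite D" by (meson finite_atMost finite_subset atMost_iff subsetI)
  moreover have "CARD('n) div 2 \<in> D" unfolding D_def using T by force
  ultimately have "Max D = CARD('n) div 2" using D_le by (intro Max_eqI) auto
  then show ?thesis unfolding max_witt_index_def witt_index_def D_def .
qed

section \<open>Maschke's theorem\<close>

lemma sum_lessThan_rotate:
  fixes f :: "nat \<Rightarrow> 'a::cancel_comm_monoid_add"
  assumes "f m = f 0"
  shows "(\<Sum>i<m. f (Suc i)) = (\<Sum>i<m. f i)"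
proof -
  have "(\<Sum>i<m. f (Suc i)) + f 0 = (\<Sum>i<m. f i) + f m"
    by (metis sum.lessThan_Suc sum.lessThan_Suc_shift add.commute)
  then show ?thesis using assms by simp
qed

theorem maschke:
  fixes x :: "'k::field^'n^'n"
  assumes xm: "mpow x m = mat 1" and m: "of_nat m \<noteq> (0::'k)"
    and U: "vec.subspace U" "invariant x U"
  shows "\<exists>W. complementary U W \<and> invariant x W"
proof -
  obtain P where P: "Vector_Spaces.linear (*s) (*s) P" "range P \<subseteq> U" "\<forall>u\<in>U. P u = u"
    using vec.linear_exists_left_inverse_on[OF vec.linear_id U(1)] by auto
  text \<open>Averaging \<open>P\<close> over the cyclic group generated by \<open>x\<close> makes it commute with \<open>x\<close>.\<close>
  define Q where "Q v = inverse (of_nat m) *s (\<Sum>i<m. mpow x (m - i) *v P (mpow x i *v v))" for v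
  have "Q (a + b) = Q a + Q b" "Q (c *s a) = c *s Q a" for a b c
    unfolding Q_def
    by (simp_all add: vec.linear_add[OF P(1)] vec.linear_scale[OF P(1)] vec.add vec.scale
        sum.distrib vector_add_ldistrib vec.scale_sum_right vector_smult_assoc mult.commute)
  then have Q: "Vector_Spaces.linear (*s) (*s) Q"
    by (simp add: Vector_Spaces.linear_iff vec.vector_space_axioms)
  have QU: "Q v \<in> U" for v
    unfolding Q_def using P(2) invariant_mpow[OF U(2)]
    by (intro vec.subspace_scale[OF U(1)] vec.subspace_sum[OF U(1)]) auto
  have Qid: "Q u = u" if "u \<in> U" for u
  proof -
    have "mpow x (m - i) *v P (mpow x i *v u) = u" if "i < m" for i
      using P(3) invariant_mpow[OF U(2) \<open>u \<in> U\<close>] that xm by (simp add: mpow_mpow_vec)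
    then show ?thesis using m by (simp add: Q_def vec_eq_iff of_nat_index)
  qed
  have Qx: "Q (x *v v) = x *v Q v" for v
  proof -
    define f where "f i = mpow x (Suc m - i) *v P (mpow x i *v v)" for i
    have "f m = f 0" using xm by (simp add: f_def)
    have "Q (x *v v) = inverse (of_nat m) *s (\<Sum>i<m. f (Suc i))"
      unfolding Q_def f_def by (simp add: matrix_vector_mul_assoc flip: mpow_Suc2)
    also have "\<dots> = inverse (of_nat m) *s (\<Sum>i<m. f i)"
      using sum_lessThan_rotate[of f m] \<open>f m = f 0\<close> by simp
    also have "\<dots> = x *v Q v"
      unfolding Q_def f_def
      by (simp add: vec.scale vec.sum matrix_vector_mul_assoc Suc_diff_le flip: mpow.simps(2))
    finally show ?thesis .
  qed
  have "complementary U {v. Q v = 0}"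
    using complementary_kernel_projection[OF U(1) Q QU Qid] .
  moreover have "invariant x {v. Q v = 0}"
    unfolding invariant_def using Qx by auto
  ultimately show ?thesis by blast
qed

section \<open>Invariant subspaces of semisimple similarities\<close>

lemma nondegenerate_subspaceI_Int_orth_compl:
  assumes form: "bil_or_herm_form \<sigma> B" and "U \<inter> orth_compl B U = {0}"
  shows "nondegenerate_subspace B U"
  unfolding nondegenerate_subspace_def
  using assms(2) bil_or_herm_form_orth_compl_sym[OF form] by blast

lemma nondegenerate_subspace_isotropic_sum:
  fixes B :: "'k::field^'n \<Rightarrow> 'k^'n \<Rightarrow> 'k"
  assumes form: "bil_or_herm_form \<sigma> B" and nd: "nondegenerate_form B"
    and T: "vec.subspace T" "totally_isotropic B T"
    and T': "complementary (orth_compl B T) T'"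
  shows "nondegenerate_subspace B {a + b | a b. a \<in> T \<and> b \<in> T'}"
  unfolding nondegenerate_subspace_def
proof clarify
  fix a b assume a: "a \<in> T" and b: "b \<in> T'"
    and orth: "\<forall>v\<in>{a + b | a b. a \<in> T \<and> b \<in> T'}. B (a + b) v = 0"
  have s: "sesquilinear \<sigma> B" using form by (rule bil_or_herm_form_sesquilinear)
  have zero_in: "0 \<in> T" "0 \<in> T'" using T(1) T' vec.subspace_0 unfolding complementary_def by auto
  have "B b t = 0" if "t \<in> T" for t
  proof -
    have "B (a + b) t = 0" using orth that zero_in(2) by force
    moreover have "B a t = 0" using T(2) a that unfolding totally_isotropic_def by blast
    ultimately show ?thesis using s unfolding sesquilinear_def by simp
  qed
  then have "b \<in> orth_compl B T \<inter> T'"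
    using b bil_or_herm_form_orth_compl_sym[OF form] by blast
  then have b0: "b = 0" using T' unfolding complementary_def by blast
  have "B a v = 0" for v
  proof -
    obtain y c where "v = y + c" "y \<in> orth_compl B T" "c \<in> T'"
      using T' unfolding complementary_def by blast
    moreover have "B a c = 0" if "c \<in> T'" for c
      using orth that zero_in(1) b0 by force
    ultimately show ?thesis
      using a s unfolding orth_compl_def sesquilinear_def by simp
  qed
  then show "a + b = 0" using nd b0 unfolding nondegenerate_form_def by simp
qed

lemma orth_compl_eq_if_isotropic_sum_eq_UNIV:
  assumes T: "T \<subseteq> orth_compl B T" and T': "complementary (orth_compl B T) T'"
    and sum: "{a + b | a b. a \<in> T \<and> b \<in> T'} = UNIV"
  shows "orth_compl B T = T"
proof
  show "orth_compl B T \<subseteq> T"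
  proof
    fix y assume y: "y \<in> orth_compl B T"
    obtain a b where ab: "y = a + b" "a \<in> T" "b \<in> T'" using sum by blast
    have "b = y - a" using ab(1) by simp
    also have "\<dots> \<in> orth_compl B T"
      using T' y T ab(2) unfolding complementary_def by (blast intro: vec.subspace_diff)
    finally have "b = 0" using ab(3) T' unfolding complementary_def by blast
    then show "y \<in> T" using ab by simp
  qed
qed (fact T)

lemma invariant_isotropic_subspace_cases:
  fixes B :: "'k::field^'n \<Rightarrow> 'k^'n \<Rightarrow> 'k" and x :: "'k^'n^'n"
  assumes form: "bil_or_herm_form \<sigma> B" and nd: "nondegenerate_form B"
    and x_in: "x \<in> similarities B" and xm: "mpow x m = mat 1" and m: "of_nat m \<noteq> (0::'k)"
    and T: "vec.subspace T" "T \<noteq> {0}" "totally_isotropic B T" "invariant x T"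
  shows "(\<exists>W. vec.subspace W \<and> W \<noteq> {0} \<and> W \<noteq> UNIV \<and> nondegenerate_subspace B W \<and>
           invariant x W \<and> invariant x (orth_compl B W))
    \<or> (max_witt_index B \<and>
        (\<exists>W. vec.subspace W \<and> totally_isotropic B W \<and> 2 * vec.dim W = CARD('n) \<and>
           invariant x W))"
proof -
  have m0: "0 < m" using m by (cases m) auto
  have s: "sesquilinear \<sigma> B" using form by (rule bil_or_herm_form_sesquilinear)
  have "vec.subspace (orth_compl B T)" "invariant x (orth_compl B T)"
    using subspace_orth_compl[OF s] invariant_orth_compl[OF x_in m0 xm T(4)] by auto
  then obtain T' where T': "complementary (orth_compl B T) T'" "invariant x T'"
    using maschke[OF xm m] by blast
  define W where "W = {a + b | a b. a \<in> T \<and> b \<in> T'}"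
  have W: "vec.subspace W"
    unfolding W_def using T(1) T'(1) vec.subspace_sums unfolding complementary_def by blast
  have W_inv: "invariant x W"
    unfolding invariant_def W_def
  proof clarify
    fix a b assume "a \<in> T" "b \<in> T'"
    then have "x *v a \<in> T" "x *v b \<in> T'" using T(4) T'(2) unfolding invariant_def by auto
    then show "\<exists>a' b'. x *v (a + b) = a' + b' \<and> a' \<in> T \<and> b' \<in> T'"
      by (intro exI[of _ "x *v a"] exI[of _ "x *v b"]) (simp add: vec.add)
  qed
  have "t \<in> W" if "t \<in> T" for t
  proof -
    have "0 \<in> T'" using T'(1) vec.subspace_0 unfolding complementary_def by blast
    then show ?thesis unfolding W_def using that by force
  qed
  then have W0: "W \<noteq> {0}" using T(1,2) vec.subspace_0 by blast
  have W_nd: "nondegenerate_subspace B W"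
    unfolding W_def using form nd T(1,3) T'(1) by (rule nondegenerate_subspace_isotropic_sum)
  show ?thesis
  proof (cases "W = UNIV")
    case False
    then show ?thesis using W W_inv W0 W_nd invariant_orth_compl[OF x_in m0 xm W_inv] by blast
  next
    case True
    have "T \<subseteq> orth_compl B T"
      using T(3) unfolding totally_isotropic_def orth_compl_def by blast
    then have "orth_compl B T = T"
      using T'(1) True unfolding W_def by (rule orth_compl_eq_if_isotropic_sum_eq_UNIV)
    then have "2 * vec.dim T = CARD('n)" using dim_orth_compl[OF form nd T(1)] by simp
    then show ?thesis using max_witt_indexI[OF form nd T(1,3)] T by blast
  qed
qed

lemma invariant_subspace_nondegenerate_cases:
  fixes B :: "'k::field^'n \<Rightarrow> 'k^'n \<Rightarrow> 'k" and x :: "'k^'n^'n"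
  assumes form: "bil_or_herm_form \<sigma> B" and nd: "nondegenerate_form B"
    and x_in: "x \<in> similarities B" and xm: "mpow x m = mat 1" and m: "of_nat m \<noteq> (0::'k)"
    and U: "vec.subspace U" "U \<noteq> {0}" "U \<noteq> UNIV" "invariant x U"
  shows "(\<exists>W. vec.subspace W \<and> W \<noteq> {0} \<and> W \<noteq> UNIV \<and> nondegenerate_subspace B W \<and>
           invariant x W \<and> invariant x (orth_compl B W))
    \<or> (max_witt_index B \<and>
        (\<exists>W. vec.subspace W \<and> totally_isotropic B W \<and> 2 * vec.dim W = CARD('n) \<and>
           invariant x W))"
proof -
  have "0 < m" using m by (cases m) auto
  have U_perp: "invariant x (orth_compl B U)" by (rule invariant_orth_compl[OF x_in \<open>0 < m\<close> xm U(4)])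
  show ?thesis
  proof (cases "U \<inter> orth_compl B U = {0}")
    case True
    then have "nondegenerate_subspace B U" by (rule nondegenerate_subspaceI_Int_orth_compl[OF form])
    then show ?thesis using U U_perp by blast
  next
    case False
    let ?T = "U \<inter> orth_compl B U"
    have "vec.subspace ?T"
      using U(1) subspace_orth_compl[OF bil_or_herm_form_sesquilinear[OF form]]
      by (rule vec.subspace_inter)
    moreover have "totally_isotropic B ?T"
      unfolding totally_isotropic_def orth_compl_def by blast
    moreover have "invariant x ?T"
      using U(4) U_perp unfolding invariant_def by blast
    ultimately show ?thesis
      using invariant_isotropic_subspace_cases[OF form nd x_in xm m] False by blast
  qed
qed

lemma reducible_semisimple_cases:
  fixes B :: "'k::field^'n \<Rightarrow> 'k^'n \<Rightarrow> 'k" and x :: "'k^'n^'n"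
  assumes form: "bil_or_herm_form \<sigma> B" and nd_or_zero: "nondegenerate_form B \<or> zero_form B"
    and x_in: "x \<in> similarities B" and xm: "mpow x m = mat 1" and m: "of_nat m \<noteq> (0::'k)"
    and U: "vec.subspace U" "U \<noteq> {0}" "U \<noteq> UNIV" "invariant x U"
  shows "(zero_form B \<and>
        (\<exists>U W. vec.subspace U \<and> vec.subspace W \<and> U \<noteq> {0} \<and> W \<noteq> {0} \<and>
           U \<inter> W = {0} \<and> {u + w | u w. u \<in> U \<and> w \<in> W} = UNIV \<and>
           invariant x U \<and> invariant x W))
    \<or> (nondegenerate_form B \<and>
        (\<exists>W. vec.subspace W \<and> W \<noteq> {0} \<and> W \<noteq> UNIV \<and> nondegenerate_subspace B W \<and>
           invariant x W \<and> invariant x (orth_compl B W)))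
    \<or> (nondegenerate_form B \<and> max_witt_index B \<and>
        (\<exists>W. vec.subspace W \<and> totally_isotropic B W \<and> 2 * vec.dim W = CARD('n) \<and>
           invariant x W))"
  using nd_or_zero
proof
  assume "nondegenerate_form B"
  then show ?thesis
    using invariant_subspace_nondegenerate_cases[OF form _ x_in xm m U] by blast
next
  assume "zero_form B"
  obtain W where W: "complementary U W" "invariant x W"
    using maschke[OF xm m U(1,4)] by blast
  have W': "vec.subspace W" "U \<inter> W = {0}" "{u + w | u w. u \<in> U \<and> w \<in> W} = UNIV"
    using W(1) unfolding complementary_def by auto
  have "W \<noteq> {0}"
  proof
    assume "W = {0}"
    have "v \<in> U" for v
    proof -
      obtain u w where "v = u + w" "u \<in> U" "w \<in> W" using W'(3) by blast
      then show ?thesis using \<open>W = {0}\<close> by simp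
    qed
    then show False using U(3) by blast
  qed
  then show ?thesis
    using \<open>zero_form B\<close> U W' W(2)
    by (intro disjI1 conjI exI[of _ U] exI[of _ W]) assumption+
qed

section \<open>Unipotent elements\<close>

lemma mpow_add_mat1_binomial:
  fixes A :: "'k::field^'n^'n"
  shows "mpow (A + mat 1) n *v v = (\<Sum>i\<le>n. of_nat (n choose i) *s (mpow A i *v v))"
proof (induction n)
  case 0
  then show ?case by simp
next
  case (Suc n)
  define g where "g i = mpow A i *v v" for i
  define S where "S = mpow (A + mat 1) n *v v"
  have IH: "S = (\<Sum>i\<le>n. of_nat (n choose i) *s g i)" using Suc unfolding g_def S_def .
  have "mpow (A + mat 1) (Suc n) *v v = A *v S + S"
    unfolding S_def by (simp add: matrix_vector_mul_assoc[symmetric] matrix_vector_mult_add_rdistrib)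
  also have "A *v S = (\<Sum>i\<le>n. of_nat (n choose i) *s g (Suc i))"
    unfolding IH by (simp add: vec.sum vec.scale g_def matrix_vector_mul_assoc)
  also have "S = g 0 + (\<Sum>i\<le>n. of_nat (n choose Suc i) *s g (Suc i))"
  proof -
    have "S = (\<Sum>i\<le>Suc n. of_nat (n choose i) *s g i)" unfolding IH by (simp add: binomial_eq_0)
    also have "\<dots> = of_nat (n choose 0) *s g 0 + (\<Sum>i\<le>n. of_nat (n choose Suc i) *s g (Suc i))"
      by (rule sum.atMost_Suc_shift)
    finally show ?thesis by simp
  qed
  also have "(\<Sum>i\<le>n. of_nat (n choose i) *s g (Suc i)) + (g 0 + (\<Sum>i\<le>n. of_nat (n choose Suc i) *s g (Suc i)))
      = of_nat (Suc n choose 0) *s g 0 + (\<Sum>i\<le>n. of_nat (Suc n choose Suc i) *s g (Suc i))"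
    by (simp add: sum.distrib vector_sadd_rdistrib add_ac)
  also have "\<dots> = (\<Sum>i\<le>Suc n. of_nat (Suc n choose i) *s g i)"
    by (rule sum.atMost_Suc_shift[symmetric])
  finally show ?case unfolding g_def .
qed

lemma mpow_add_mat1_CHAR:
  fixes A :: "'k::field^'n^'n"
  assumes p: "prime CHAR('k)"
  shows "mpow (A + mat 1) CHAR('k) = mpow A CHAR('k) + mat 1"
proof -
  have "mpow (A + mat 1) CHAR('k) *v v = (mpow A CHAR('k) + mat 1) *v v" for v
  proof -
    define f where "f i = (of_nat (CHAR('k) choose i) :: 'k) *s (mpow A i *v v)" for i
    have "f i = 0" if "i \<in> {..CHAR('k)} - {0, CHAR('k)}" for i
    proof -
      have "CHAR('k) dvd (CHAR('k) choose i)" using p that by (intro dvd_choose_prime) auto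
      then show ?thesis by (simp add: f_def of_nat_eq_0_iff_char_dvd)
    qed
    then have "(\<Sum>i\<le>CHAR('k). f i) = (\<Sum>i\<in>{0, CHAR('k)}. f i)"
      by (intro sum.mono_neutral_right) auto
    also have "\<dots> = v + mpow A CHAR('k) *v v"
      using p by (simp add: f_def prime_gt_0_nat)
    finally show ?thesis
      unfolding f_def mpow_add_mat1_binomial by (simp add: matrix_vector_mult_add_rdistrib add.commute)
  qed
  then show ?thesis by (simp add: matrix_eq)
qed

lemma mpow_add_mat1_CHAR_power:
  fixes A :: "'k::field^'n^'n"
  assumes "prime CHAR('k)"
  shows "mpow (A + mat 1) (CHAR('k) ^ k) = mpow A (CHAR('k) ^ k) + mat 1"
proof (induction k arbitrary: A)
  case 0
  then show ?case by simp
next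
  case (Suc k)
  then show ?case by (simp add: mpow_mult mpow_add_mat1_CHAR[OF assms])
qed

lemma nilpotent_kernel_nonzero:
  fixes A :: "'k::field^'n^'n"
  assumes "mpow A n = 0"
  shows "\<exists>v. v \<noteq> 0 \<and> A *v v = 0"
  using assms
proof (induction n)
  case 0
  then have "(mat 1 :: 'k^'n^'n) $ i $ i = 0" for i by simp
  then show ?case by (simp add: mat_def)
next
  case (Suc n)
  show ?case
  proof (cases "mpow A n = 0")
    case True
    then show ?thesis by (rule Suc.IH)
  next
    case False
    then obtain w where w: "mpow A n *v w \<noteq> 0"
      by (metis matrix_eq matrix_vector_mult_0)
    have "A *v (mpow A n *v w) = 0"
      using Suc.prems by (simp add: matrix_vector_mul_assoc)
    then show ?thesis using w by blast
  qed
qed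

lemma fixed_vector_if_order_CHAR_power:
  fixes x :: "'k::field^'n^'n"
  assumes "prime CHAR('k)" and "mpow x (CHAR('k) ^ k) = mat 1"
  shows "\<exists>v. v \<noteq> 0 \<and> x *v v = v"
proof -
  have "mpow (x - mat 1) (CHAR('k) ^ k) = 0"
    using mpow_add_mat1_CHAR_power[OF assms(1), of "x - mat 1" k] assms(2) by simp
  then obtain v where "v \<noteq> 0" "(x - mat 1) *v v = 0"
    using nilpotent_kernel_nonzero by blast
  then show ?thesis by (auto simp: matrix_vector_mult_diff_rdistrib)
qed

lemma invariant_line_if_fixed_vector:
  assumes "v \<noteq> 0" "x *v v = v"
  shows "\<exists>W. vec.subspace W \<and> vec.dim W = 1 \<and> invariant x W"
proof (intro exI conjI)
  show "vec.subspace (vec.span {v})" by (rule vec.subspace_span)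
  show "vec.dim (vec.span {v}) = 1" using assms(1) by simp
  show "invariant x (vec.span {v})"
    unfolding invariant_def vec.span_singleton using assms(2) by (auto simp: vec.scale)
qed

theorem lemma1p11:
  fixes \<sigma> :: "'k::{field,finite} \<Rightarrow> 'k"
    and B :: "'k^'n \<Rightarrow> 'k^'n \<Rightarrow> 'k"
    and x :: "'k^'n^'n"
  assumes form: "bil_or_herm_form \<sigma> B"
    and nd_or_zero: "nondegenerate_form B \<or> zero_form B"
    and x_in: "x \<in> similarities B"
    and ppow: "\<exists>q k. prime q \<and> elem_order x = q ^ k"
    and img_prime: "prime (quot_order (group_center (similarities B)) x)"
  shows "(unipotent x \<and> (\<exists>W. vec.subspace W \<and> vec.dim W = 1 \<and> invariant x W))
    \<or> (zero_form B \<and> semisimple x \<and>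
        (\<exists>U W. vec.subspace U \<and> vec.subspace W \<and> U \<noteq> {0} \<and> W \<noteq> {0} \<and>
           U \<inter> W = {0} \<and> {u + w | u w. u \<in> U \<and> w \<in> W} = UNIV \<and>
           invariant x U \<and> invariant x W))
    \<or> (nondegenerate_form B \<and> semisimple x \<and>
        (\<exists>W. vec.subspace W \<and> W \<noteq> {0} \<and> W \<noteq> UNIV \<and> nondegenerate_subspace B W \<and>
           invariant x W \<and> invariant x (orth_compl B W)))
    \<or> (nondegenerate_form B \<and> max_witt_index B \<and> semisimple x \<and>
        (\<exists>W. vec.subspace W \<and> totally_isotropic B W \<and> 2 * vec.dim W = CARD('n) \<and>
           invariant x W))
    \<or> (semisimple x \<and> acts_irreducibly x)"
proof -
  obtain q k where q: "prime q" "elem_order x = q ^ k" using ppow by blast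
  have "invertible x" using x_in unfolding similarities_def by blast
  then have xm: "mpow x (elem_order x) = mat 1" using mpow_elem_order by blast
  have p: "prime CHAR('k)" by (simp add: finite_imp_CHAR_pos prime_CHAR_semidom)
  show ?thesis
  proof (cases "q = CHAR('k)")
    case True
    then have "unipotent x" using q(2) unfolding unipotent_def by blast
    moreover have "mpow x (CHAR('k) ^ k) = mat 1" using xm q(2) True by simp
    then obtain v where "v \<noteq> 0" "x *v v = v"
      using fixed_vector_if_order_CHAR_power[OF p] by blast
    then have "\<exists>W. vec.subspace W \<and> vec.dim W = 1 \<and> invariant x W"
      by (rule invariant_line_if_fixed_vector)
    ultimately show ?thesis by (intro disjI1 conjI)
  next
    case False
    then have ss: "semisimple x"
      unfolding semisimple_def q(2) using q(1) p by (simp add: primes_coprime)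
    show ?thesis
    proof (cases "acts_irreducibly x")
      case False
      then obtain U where U: "vec.subspace U" "U \<noteq> {0}" "U \<noteq> UNIV" "invariant x U"
        unfolding acts_irreducibly_def by blast
      from reducible_semisimple_cases[OF form nd_or_zero x_in xm semisimple_of_nat_order_neq_0[OF ss] U]
      show ?thesis using ss by blast
    qed (use ss in blast)
  qed
qed

end
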